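(* Let $(\Omega,\mathcal{A},\mu)$ be a diffuse $\sigma$-finite measure space, let $p\in[1,\infty)$, and let $q\in(1,\infty]$ with $\frac1p+\frac1q=1$. Let $\eta\in L_q(\mu)$ and $g\in L_p(\mu)$ with $\eta\ge0$, $g\ge0$, and define $K\in\mathcal{L}(L_p(\mu))$ by \[ Kf:=\Bigl(\int\eta f\,d\mu\Bigr)g\qquad(f\in L_p(\mu)). \] Let $u\in L_\infty(\mu)$ with $u\ge0$ be such that $M_u\le K$, i.e. $K-M_u$ is a positive operator. Then $u=0$.
   Context: $\mu$ is diffuse if every measurable $A$ with $\mu(A)>0$ contains a measurable $A'$ with $0<\mu(A')<\mu(A)$. $M_u$ is the multiplication operator $M_uf:=uf$ on $L_p(\mu)$. An operator $S\in\mathcal{L}(L_p(\mu))$ is positive if $Sf\ge0$ for all $f\ge0$ in $L_p(\mu)$; $S\le T$ means $T-S$ is positive. *)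

theory Defs
  imports "HOL-Analysis.Analysis"
begin

definition diffuse :: "'a measure \<Rightarrow> bool" where
  "diffuse M \<longleftrightarrow> (\<forall>A \<in> sets M. emeasure M A > 0 \<longrightarrow>
      (\<exists>A' \<in> sets M. A' \<subseteq> A \<and> 0 < emeasure M A' \<and> emeasure M A' < emeasure M A))"

definition memLp :: "'a measure \<Rightarrow> real \<Rightarrow> ('a \<Rightarrow> real) \<Rightarrow> bool" where
  "memLp M p f \<longleftrightarrow> f \<in> borel_measurable M \<and> integrable M (\<lambda>x. \<bar>f x\<bar> powr p)"

definition memLinf :: "'a measure \<Rightarrow> ('a \<Rightarrow> real) \<Rightarrow> bool" where
  "memLinf M f \<longleftrightarrow> f \<in> borel_measurable M \<and> (\<exists>C. AE x in M. \<bar>f x\<bar> \<le> C)"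

definition memLq :: "'a measure \<Rightarrow> ereal \<Rightarrow> ('a \<Rightarrow> real) \<Rightarrow> bool" where
  "memLq M q f \<longleftrightarrow> (if q = \<infinity> then memLinf M f else memLp M (real_of_ereal q) f)"

end

theory Submission
  imports Defs
begin

text \<open>If \<open>u\<close> is not a.e. zero, \<sigma>-finiteness provides a set \<open>A\<close> of finite positive measure on
which \<open>u \<ge> \<epsilon>\<close> while \<open>\<bar>\<eta>\<bar>, \<bar>g\<bar> \<le> N\<close>, and diffuseness provides \<open>B \<subseteq> A\<close> with
\<open>0 < \<mu>(B) < \<epsilon> / (N\<^sup>2 + 1)\<close>. Testing \<open>K - M\<^sub>u \<ge> 0\<close> on the indicator of \<open>B\<close> gives, at some point
of \<open>B\<close>, \<open>\<epsilon> \<le> u \<le> (\<integral>\<^sub>B \<eta>) g \<le> N\<^sup>2 \<mu>(B) < \<epsilon>\<close>.\<close>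

lemma diffuse_exists_subset_le_half:
  assumes "diffuse M" "A \<in> sets M" "emeasure M A < \<infinity>" "0 < emeasure M A"
  shows "\<exists>B\<in>sets M. B \<subseteq> A \<and> 0 < emeasure M B \<and> measure M B \<le> measure M A / 2"
proof -
  obtain C where C: "C \<in> sets M" "C \<subseteq> A" "0 < emeasure M C" "emeasure M C < emeasure M A"
    using assms unfolding diffuse_def by blast
  have finA: "emeasure M A \<noteq> \<infinity>"
    using assms(3) by simp
  have "emeasure M (A - C) = emeasure M A - emeasure M C"
    using C finA assms(2) by (intro emeasure_Diff) auto
  then have "0 < emeasure M (A - C)"
    using C(4) by (simp add: diff_gr0_ennreal)
  moreover have "measure M (A - C) = measure M A - measure M C"
    using C finA assms(2) by (intro measure_Diff) auto
  ultimately show ?thesis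
    using C assms(2) by (cases "measure M C \<le> measure M A / 2") auto
qed

lemma diffuse_exists_subset_le_half_power:
  assumes "diffuse M" "A \<in> sets M" "emeasure M A < \<infinity>" "0 < emeasure M A"
  shows "\<exists>B\<in>sets M. B \<subseteq> A \<and> 0 < emeasure M B \<and> measure M B \<le> measure M A / 2 ^ n"
proof (induction n)
  case 0
  then show ?case
    using assms(2,4) by auto
next
  case (Suc n)
  then obtain B where B: "B \<in> sets M" "B \<subseteq> A" "0 < emeasure M B"
    "measure M B \<le> measure M A / 2 ^ n"
    by blast
  have "emeasure M B < \<infinity>"
    using emeasure_mono[OF B(2) assms(2)] assms(3) by simp
  then obtain C where "C \<in> sets M" "C \<subseteq> B" "0 < emeasure M C" "measure M C \<le> measure M B / 2"
    using diffuse_exists_subset_le_half[OF assms(1) B(1) _ B(3)] by blast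
  then show ?case
    using B by (intro bexI[of _ C]) auto
qed

lemma diffuse_exists_small_subset:
  assumes "diffuse M" "A \<in> sets M" "emeasure M A < \<infinity>" "0 < emeasure M A" "0 < d"
  shows "\<exists>B\<in>sets M. B \<subseteq> A \<and> 0 < measure M B \<and> measure M B < d"
proof -
  obtain n where "measure M A / d < 2 ^ n"
    using real_arch_pow[of 2 "measure M A / d"] by auto
  then have n: "measure M A / 2 ^ n < d"
    using assms(5) by (simp add: field_simps)
  obtain B where B: "B \<in> sets M" "B \<subseteq> A" "0 < emeasure M B" "measure M B \<le> measure M A / 2 ^ n"
    using diffuse_exists_subset_le_half_power[OF assms(1-4)] by blast
  have "emeasure M B < \<infinity>"
    using emeasure_mono[OF B(2) assms(2)] assms(3) by simp
  then have "0 < measure M B"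
    using B(3) by (simp add: emeasure_eq_ennreal_measure)
  then show ?thesis
    using B n by auto
qed

lemma (in sigma_finite_measure) exists_finite_set_bounded_away_from_zero:
  fixes u h :: "'a \<Rightarrow> real"
  assumes [measurable]: "u \<in> borel_measurable M" "h \<in> borel_measurable M"
    and "\<not> (AE x in M. u x \<le> 0)"
  shows "\<exists>A\<in>sets M. 0 < emeasure M A \<and> emeasure M A < \<infinity> \<and>
    (\<exists>\<epsilon>>0. \<exists>N. \<forall>x\<in>A. \<epsilon> \<le> u x \<and> h x \<le> N)"
proof -
  obtain F :: "nat \<Rightarrow> 'a set" where F: "range F \<subseteq> sets M" "(\<Union>i. F i) = space M"
    "\<And>i. emeasure M (F i) \<noteq> \<infinity>" "incseq F"
    using sigma_finite_incseq by metis
  define A where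
    "A m = {x\<in>space M. inverse (real (Suc m)) \<le> u x \<and> h x \<le> real m} \<inter> F m" for m
  have A_sets: "range A \<subseteq> sets M"
    using F(1) unfolding A_def by auto
  have "incseq A"
  proof (rule incseq_SucI)
    fix m
    have le: "inverse (2 + real m) \<le> inverse (1 + real m)"
      by (simp add: field_simps)
    show "A m \<subseteq> A (Suc m)"
      using incseq_SucD[OF F(4), of m] unfolding A_def by (auto intro: order_trans[OF le])
  qed
  have "(\<Union>m. A m) = {x\<in>space M. 0 < u x}"
  proof (intro antisym subsetI)
    fix x
    assume x: "x \<in> {x\<in>space M. 0 < u x}"
    then obtain m0 where m0: "x \<in> F m0"
      using F(2) by auto
    have "\<forall>\<^sub>F m in sequentially. x \<in> F m"
      using eventually_ge_at_top[of m0] by eventually_elim (meson F(4) incseqD subsetD m0)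
    moreover have "\<forall>\<^sub>F m in sequentially. inverse (real (Suc m)) < u x"
      using x by (intro order_tendstoD(2)[OF LIMSEQ_inverse_real_of_nat]) auto
    moreover have "\<forall>\<^sub>F m in sequentially. h x \<le> real m"
      using filterlim_real_sequentially by (simp add: filterlim_at_top)
    ultimately have "\<forall>\<^sub>F m in sequentially. x \<in> A m"
      unfolding A_def by eventually_elim (use x in auto)
    then show "x \<in> (\<Union>m. A m)"
      using eventually_happens'[OF sequentially_bot] by blast
  qed (auto simp: A_def intro: less_le_trans[rotated])
  moreover have "emeasure M {x\<in>space M. 0 < u x} \<noteq> 0"
    using assms(3) by (subst (asm) AE_iff_measurable[of "{x\<in>space M. 0 < u x}"]) auto
  ultimately have "0 < (SUP m. emeasure M (A m))"
    using SUP_emeasure_incseq[OF A_sets \<open>incseq A\<close>] by (simp add: zero_less_iff_neq_zero)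
  then obtain m where m: "0 < emeasure M (A m)"
    by (auto simp: less_SUP_iff)
  have "emeasure M (A m) \<le> emeasure M (F m)"
    using F(1) by (intro emeasure_mono) (auto simp: A_def)
  then have "emeasure M (A m) < \<infinity>"
    using F(3)[of m] by (simp add: less_top top_unique)
  moreover have "\<forall>x\<in>A m. inverse (real (Suc m)) \<le> u x \<and> h x \<le> real m"
    unfolding A_def by auto
  moreover have "0 < inverse (real (Suc m))"
    by simp
  ultimately show ?thesis
    using A_sets m by blast
qed

lemma abs_integral_mult_indicator_le:
  fixes f :: "'a \<Rightarrow> real"
  assumes "B \<in> sets M" "emeasure M B < \<infinity>" "\<And>x. x \<in> B \<Longrightarrow> \<bar>f x\<bar> \<le> N"
  shows "\<bar>\<integral>x. f x * indicator B x \<partial>M\<bar> \<le> N * measure M B"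
proof (cases "B = {}")
  case False
  then have "0 \<le> N"
    using assms(3) abs_ge_zero order_trans by blast
  have "\<bar>\<integral>x. f x * indicator B x \<partial>M\<bar> \<le> (\<integral>x. \<bar>f x * indicator B x\<bar> \<partial>M)"
    by (rule integral_abs_bound)
  also have "\<dots> \<le> (\<integral>x. N * indicator B x \<partial>M)"
    using assms \<open>0 \<le> N\<close> by (intro integral_mono') (auto split: split_indicator)
  also have "\<dots> = N * measure M B"
    using assms(1,2) by simp
  finally show ?thesis .
qed simp

lemma AE_imp_ex_in_non_null_set:
  assumes "AE x in M. P x" "B \<in> sets M" "emeasure M B \<noteq> 0"
  shows "\<exists>x\<in>B. P x"
proof (rule ccontr)
  assume "\<not> (\<exists>x\<in>B. P x)"
  moreover obtain N where "{x\<in>space M. \<not> P x} \<subseteq> N" "emeasure M N = 0" "N \<in> sets M"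
    using assms(1) by (rule AE_E)
  ultimately have "emeasure M B \<le> emeasure M N"
    using sets.sets_into_space[OF assms(2)] by (intro emeasure_mono) auto
  then show False
    using assms(3) \<open>emeasure M N = 0\<close> by simp
qed

lemma memLp_indicator:
  assumes "B \<in> sets M" "emeasure M B < \<infinity>"
  shows "memLp M p (indicator B)"
proof -
  have "(\<lambda>x. \<bar>indicator B x :: real\<bar> powr p) = indicator B"
    by (auto simp: indicator_def)
  then show ?thesis
    unfolding memLp_def using assms by simp
qed

lemma rank_one_dominates_mult_on_indicator_bound:
  fixes u \<eta> g :: "'a \<Rightarrow> real"
  assumes "B \<in> sets M" "emeasure M B < \<infinity>" "0 < measure M B"
    and bounds: "\<And>x. x \<in> B \<Longrightarrow> \<epsilon> \<le> u x \<and> \<bar>\<eta> x\<bar> \<le> N \<and> \<bar>g x\<bar> \<le> N"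
    and test: "AE x in M. (\<integral>y. \<eta> y * indicator B y \<partial>M) * g x - u x * indicator B x \<ge> 0"
  shows "\<epsilon> \<le> N\<^sup>2 * measure M B"
proof -
  define c where "c = (\<integral>y. \<eta> y * indicator B y \<partial>M)"
  have c_bound: "\<bar>c\<bar> \<le> N * measure M B"
    unfolding c_def using assms(1,2) bounds by (intro abs_integral_mult_indicator_le) auto
  have "emeasure M B \<noteq> 0"
    using assms(3) by (auto simp: measure_def)
  then obtain x where x: "x \<in> B" "0 \<le> c * g x - u x * indicator B x"
    using AE_imp_ex_in_non_null_set[OF test assms(1)] unfolding c_def by blast
  have "\<epsilon> \<le> \<bar>c * g x\<bar>"
    using bounds[OF x(1)] x abs_ge_self[of "c * g x"] by simp
  also have "\<dots> = \<bar>c\<bar> * \<bar>g x\<bar>"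
    by (rule abs_mult)
  also have "\<dots> \<le> N * measure M B * N"
    using c_bound bounds[OF x(1)] by (intro mult_mono) auto
  finally show ?thesis
    by (simp add: power2_eq_square mult_ac)
qed

theorem lemma3p1:
  fixes M :: "'a measure" and p :: real and q :: ereal
    and \<eta> g u :: "'a \<Rightarrow> real"
  assumes "sigma_finite_measure M" and "diffuse M"
    and "1 \<le> p" and "1 < q" and "1 / ereal p + 1 / q = 1"
    and "memLq M q \<eta>" and "AE x in M. \<eta> x \<ge> 0"
    and "memLp M p g" and "AE x in M. g x \<ge> 0"
    and "memLinf M u" and "AE x in M. u x \<ge> 0"
    and pos: "\<And>f. memLp M p f \<Longrightarrow> (AE x in M. f x \<ge> 0) \<Longrightarrow>
              AE x in M. (\<integral>y. \<eta> y * f y \<partial>M) * g x - u x * f x \<ge> 0"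
  shows "AE x in M. u x = 0"
proof (rule ccontr)
  assume nz: "\<not> (AE x in M. u x = 0)"
  have [measurable]: "\<eta> \<in> borel_measurable M" "g \<in> borel_measurable M" "u \<in> borel_measurable M"
    using assms(6,8,10) by (auto simp: memLq_def memLinf_def memLp_def split: if_splits)
  have "\<not> (AE x in M. u x \<le> 0)"
  proof
    assume "AE x in M. u x \<le> 0"
    with assms(11) have "AE x in M. u x = 0"
      by eventually_elim simp
    with nz show False ..
  qed
  then obtain A \<epsilon> N where A: "A \<in> sets M" "0 < emeasure M A" "emeasure M A < \<infinity>" "0 < \<epsilon>"
    and bounds: "\<And>x. x \<in> A \<Longrightarrow> \<epsilon> \<le> u x \<and> max \<bar>\<eta> x\<bar> \<bar>g x\<bar> \<le> N"
    using sigma_finite_measure.exists_finite_set_bounded_away_from_zero[OF assms(1),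
        of u "\<lambda>x. max \<bar>\<eta> x\<bar> \<bar>g x\<bar>"]
    by auto
  have denom_pos: "0 < N\<^sup>2 + 1"
    by (intro add_nonneg_pos) auto
  then have "0 < \<epsilon> / (N\<^sup>2 + 1)"
    using A(4) by simp
  then obtain B where B: "B \<in> sets M" "B \<subseteq> A" "0 < measure M B" "measure M B < \<epsilon> / (N\<^sup>2 + 1)"
    using diffuse_exists_small_subset[OF assms(2) A(1,3,2)] by blast
  have B_finite: "emeasure M B < \<infinity>"
    using emeasure_mono[OF B(2) A(1)] A(3) by simp
  have bounds_B: "\<epsilon> \<le> u x \<and> \<bar>\<eta> x\<bar> \<le> N \<and> \<bar>g x\<bar> \<le> N" if "x \<in> B" for x
    using bounds[OF subsetD[OF B(2) that]] by simp
  have "\<epsilon> \<le> N\<^sup>2 * measure M B"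
    using rank_one_dominates_mult_on_indicator_bound[OF B(1) B_finite B(3) bounds_B]
      pos[OF memLp_indicator[OF B(1) B_finite]] by simp
  moreover have "N\<^sup>2 * measure M B < \<epsilon>"
    using B(3,4) denom_pos by (simp add: pos_less_divide_eq algebra_simps)
  ultimately show False
    by simp
qed

end
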